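(* Let $\alpha\in(0,1)$ be constant. Suppose $(p_a(t))_{a\in\mathcal A}$ satisfies $p_a(t)>0$ for all $a$ and $\sum_a p_a(t)=1$, and $(p_a(t+1))_{a\in\mathcal A}$ is obtained by one SAMBA update with learning rate $\alpha$. Then $p_a(t+1)>0$ for all $a\in\mathcal A$ and $\sum_a p_a(t+1)=1$.
   Context: One SAMBA update: $a_\star(t)$ is an arm maximizing $p_a(t)$, $p_\star(t)=p_{a_\star(t)}(t)$. Exactly one arm is played; $I_a(t)\in\{0,1\}$ indicates that arm $a$ is played, with $\sum_a I_a(t)=1$; rewards $R_a(t)\in\{0,1\}$; $I_\star(t)=I_{a_\star(t)}(t)$, $R_\star(t)=R_{a_\star(t)}(t)$. For $a\ne a_\star(t)$: $p_a(t+1)=p_a(t)+\alpha p_a(t)^2\big[\frac{I_a(t)R_a(t)}{p_a(t)}-\frac{I_\star(t)R_\star(t)}{p_\star(t)}\big]$, and $p_{a_\star(t)}(t+1)=1-\sum_{a\ne a_\star(t)}p_a(t+1)$. *)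

theory Defs
  imports Complex_Main
begin

text \<open>One SAMBA update. Arms form a finite set A; p is the current probability vector,
  astar the (chosen) arm maximizing p, I the play indicators and R the rewards.\<close>

definition samba_other :: "real \<Rightarrow> ('a \<Rightarrow> real) \<Rightarrow> 'a \<Rightarrow> ('a \<Rightarrow> real) \<Rightarrow> ('a \<Rightarrow> real) \<Rightarrow> 'a \<Rightarrow> real" where
  "samba_other \<alpha> p astar I R a =
     p a + \<alpha> * (p a)^2 * (I a * R a / p a - I astar * R astar / p astar)"

definition samba_update :: "real \<Rightarrow> 'a set \<Rightarrow> ('a \<Rightarrow> real) \<Rightarrow> 'a \<Rightarrow> ('a \<Rightarrow> real) \<Rightarrow> ('a \<Rightarrow> real) \<Rightarrow> 'a \<Rightarrow> real" where
  "samba_update \<alpha> A p astar I R a =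
     (if a = astar then 1 - (\<Sum>b\<in>A - {astar}. samba_other \<alpha> p astar I R b)
      else samba_other \<alpha> p astar I R a)"

end

theory Submission
  imports Defs
begin

text \<open>Write \<open>c = I(a\<^sub>\<star>) R(a\<^sub>\<star>) / p(a\<^sub>\<star>) \<le> 1 / p(a\<^sub>\<star>)\<close>. For an arm \<open>a \<noteq> a\<^sub>\<star>\<close> the update only
  loses \<open>\<alpha> p(a)\<^sup>2 c \<le> \<alpha> p(a) \<cdot> p(a) / p(a\<^sub>\<star>) \<le> \<alpha> p(a)\<close>, because \<open>a\<^sub>\<star>\<close> is a maximizing arm.
  The arm \<open>a\<^sub>\<star>\<close> absorbs the opposite of the changes of the others: it loses at most
  \<open>\<alpha> \<Sum>\<^sub>b p(b) I(b) R(b) \<le> \<alpha> p(a\<^sub>\<star>) \<Sum>\<^sub>b I(b) \<le> \<alpha> p(a\<^sub>\<star>)\<close>. Hence every new probability is at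
  least \<open>(1 - \<alpha>)\<close> times the old one, and the total mass is 1 by construction.\<close>

lemma samba_update_sum:
  assumes "finite A" and "astar \<in> A"
  shows "(\<Sum>a\<in>A. samba_update \<alpha> A p astar I R a) = 1"
proof -
  have "(\<Sum>a\<in>A - {astar}. samba_update \<alpha> A p astar I R a)
      = (\<Sum>b\<in>A - {astar}. samba_other \<alpha> p astar I R b)"
    by (rule sum.cong) (auto simp: samba_update_def)
  then show ?thesis
    using sum.remove[OF assms, of "samba_update \<alpha> A p astar I R"]
    by (simp add: samba_update_def)
qed

lemma samba_other_eq:
  assumes "p a \<noteq> 0"
  shows "samba_other \<alpha> p astar I R a
    = p a + \<alpha> * p a * (I a * R a) - \<alpha> * (p a)\<^sup>2 * (I astar * R astar / p astar)"
  using assms unfolding samba_other_def by (simp add: field_simps power2_eq_square)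

lemma samba_other_ge:
  assumes "0 \<le> \<alpha>" and "0 < p a" and "p a \<le> p astar"
    and "0 \<le> I a * R a" and "I astar * R astar \<le> 1"
  shows "(1 - \<alpha>) * p a \<le> samba_other \<alpha> p astar I R a"
proof -
  have "0 < p astar" using assms(2,3) by linarith
  then have "I astar * R astar / p astar \<le> 1 / p astar"
    using assms(5) by (simp add: divide_right_mono)
  then have "(p a)\<^sup>2 * (I astar * R astar / p astar) \<le> (p a)\<^sup>2 * (1 / p astar)"
    by (rule mult_left_mono) simp
  also have "\<dots> = p a * (p a / p astar)"
    by (simp add: power2_eq_square)
  also have "\<dots> \<le> p a"
    using assms(2,3) \<open>0 < p astar\<close> by (intro mult_left_le) auto
  finally have "\<alpha> * ((p a)\<^sup>2 * (I astar * R astar / p astar)) \<le> \<alpha> * p a"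
    using assms(1) by (rule mult_left_mono)
  moreover have "0 \<le> \<alpha> * p a * (I a * R a)"
    using assms(1,2,4) by simp
  ultimately show ?thesis
    using samba_other_eq[of p a \<alpha> astar I R] assms(2) by (simp add: algebra_simps)
qed

lemma samba_update_astar_eq:
  assumes "finite A" and "astar \<in> A" and "(\<Sum>a\<in>A. p a) = 1"
    and "\<And>b. b \<in> A - {astar} \<Longrightarrow> p b \<noteq> 0"
  shows "samba_update \<alpha> A p astar I R astar
    = p astar - \<alpha> * (\<Sum>b\<in>A - {astar}. p b * (I b * R b))
      + \<alpha> * (I astar * R astar / p astar) * (\<Sum>b\<in>A - {astar}. (p b)\<^sup>2)"
proof -
  have "(\<Sum>b\<in>A - {astar}. samba_other \<alpha> p astar I R b)
      = (\<Sum>b\<in>A - {astar}. p b + \<alpha> * p b * (I b * R b)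
                          - \<alpha> * (p b)\<^sup>2 * (I astar * R astar / p astar))"
    using assms(4) by (intro sum.cong) (auto simp: samba_other_eq)
  also have "\<dots> = (\<Sum>b\<in>A - {astar}. p b) + \<alpha> * (\<Sum>b\<in>A - {astar}. p b * (I b * R b))
      - \<alpha> * (I astar * R astar / p astar) * (\<Sum>b\<in>A - {astar}. (p b)\<^sup>2)"
    by (simp add: sum.distrib sum_subtractf sum_distrib_left mult_ac)
  moreover have "(\<Sum>b\<in>A - {astar}. p b) = 1 - p astar"
    using sum.remove[OF assms(1,2), of p] assms(3) by simp
  ultimately show ?thesis
    by (simp add: samba_update_def)
qed

lemma sum_weighted_le_max:
  fixes w x :: "'a \<Rightarrow> real"
  assumes "\<And>b. b \<in> B \<Longrightarrow> 0 \<le> w b" and "\<And>b. b \<in> B \<Longrightarrow> x b \<le> M"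
  shows "(\<Sum>b\<in>B. w b * x b) \<le> M * (\<Sum>b\<in>B. w b)"
  unfolding sum_distrib_left
  using assms by (intro sum_mono) (metis mult.commute mult_left_mono)

lemma samba_update_astar_ge:
  assumes "finite A" and "astar \<in> A" and "0 \<le> \<alpha>"
    and "\<And>a. a \<in> A \<Longrightarrow> 0 < p a" and "(\<Sum>a\<in>A. p a) = 1"
    and "\<And>a. a \<in> A \<Longrightarrow> p a \<le> p astar"
    and "\<And>a. a \<in> A \<Longrightarrow> 0 \<le> I a" and "(\<Sum>a\<in>A. I a) = 1"
    and "\<And>a. a \<in> A \<Longrightarrow> 0 \<le> R a \<and> R a \<le> 1"
  shows "(1 - \<alpha>) * p astar \<le> samba_update \<alpha> A p astar I R astar"
proof -
  let ?B = "A - {astar}"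
  have "(\<Sum>b\<in>?B. I b * (p b * R b)) \<le> p astar * (\<Sum>b\<in>?B. I b)"
  proof (rule sum_weighted_le_max)
    fix b assume "b \<in> ?B"
    then have "0 < p b" "p b \<le> p astar" "0 \<le> R b" "R b \<le> 1"
      using assms(4,6,9) by auto
    then show "p b * R b \<le> p astar"
      using mult_left_le[of "R b" "p b"] by linarith
  qed (use assms(7) in auto)
  also have "\<dots> \<le> p astar"
    using sum.remove[OF assms(1,2), of I] assms(2,4,7,8)
    by (intro mult_left_le) fastforce+
  finally have "\<alpha> * (\<Sum>b\<in>?B. p b * (I b * R b)) \<le> \<alpha> * p astar"
    using assms(3) by (simp add: mult_left_mono mult_ac)
  moreover have "0 \<le> \<alpha> * (I astar * R astar / p astar) * (\<Sum>b\<in>?B. (p b)\<^sup>2)"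
    using assms(3) assms(4,7,9)[OF assms(2)] by (intro mult_nonneg_nonneg sum_nonneg) auto
  moreover have "samba_update \<alpha> A p astar I R astar
    = p astar - \<alpha> * (\<Sum>b\<in>?B. p b * (I b * R b))
      + \<alpha> * (I astar * R astar / p astar) * (\<Sum>b\<in>?B. (p b)\<^sup>2)"
    using assms(4) by (intro samba_update_astar_eq[OF assms(1,2,5)]) force
  ultimately show ?thesis
    by (simp add: algebra_simps)
qed

theorem lemma21:
  fixes A :: "'a set" and p I R :: "'a \<Rightarrow> real" and astar :: 'a and \<alpha> :: real
  assumes "finite A"
    and "0 < \<alpha>" and "\<alpha> < 1"
    and "\<And>a. a \<in> A \<Longrightarrow> p a > 0"
    and "(\<Sum>a\<in>A. p a) = 1"
    and "astar \<in> A" and "\<And>a. a \<in> A \<Longrightarrow> p a \<le> p astar"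
    and "\<And>a. a \<in> A \<Longrightarrow> I a \<in> {0, 1}"
    and "(\<Sum>a\<in>A. I a) = 1"
    and "\<And>a. a \<in> A \<Longrightarrow> R a \<in> {0, 1}"
  shows "(\<forall>a\<in>A. samba_update \<alpha> A p astar I R a > 0)
         \<and> (\<Sum>a\<in>A. samba_update \<alpha> A p astar I R a) = 1"
proof (intro conjI ballI)
  fix a assume "a \<in> A"
  have "0 < (1 - \<alpha>) * p a"
    using assms(3,4) \<open>a \<in> A\<close> by simp
  also have "\<dots> \<le> samba_update \<alpha> A p astar I R a"
  proof (cases "a = astar")
    case True
    show ?thesis
      unfolding True using assms
      by (intro samba_update_astar_ge) fastforce+
  next
    case False
    then show ?thesis
      unfolding samba_update_def using assms \<open>a \<in> A\<close>
      by (simp, intro samba_other_ge) fastforce+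
  qed
  finally show "samba_update \<alpha> A p astar I R a > 0" .
next
  show "(\<Sum>a\<in>A. samba_update \<alpha> A p astar I R a) = 1"
    using assms(1,6) by (rule samba_update_sum)
qed

end
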